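(* Let $V$ be a finite set of variables and let $(\mathit{base}_0, \mathit{stay}_0, \mathit{step}_0, \mathit{conc}_0)$ and $(\mathit{base}_1, \mathit{stay}_1, \mathit{step}_1, \mathit{conc}_1)$ be generalized acceleration lemmas (GALs) over $V$. Let $\mathit{step} := (\mathit{conc}_0 \land \mathit{step}_0 ) \lor (\mathit{conc}_1 \land \mathit{step}_1 \land \mathit{stay}_0)$. Then the tuple $(\mathit{base}_0 \lor \mathit{base}_1,\ \mathit{stay}_0 \land \mathit{stay}_1,\ \mathit{step},\ \mathit{conc}_0 \lor \mathit{conc}_1)$ is also a GAL over $V$.
   Context: Fix a first-order theory $T$. For a set of variables $X$, $\mathcal{A}(X)$ denotes the set of assignments $\nu: X \to \mathcal{V}$ (values). $X' = \{x' \mid x \in X\}$ is a disjoint primed copy of $X$; for $\nu \in \mathcal{A}(X)$, $\nu' \in \mathcal{A}(X')$ is given by $\nu'(x') = \nu(x)$; for $\nu_1,\nu_2 \in \mathcal{A}(X)$, $\langle \nu_1,\nu_2\rangle := \nu_1 \uplus \nu_2'$. $\nu \models_T \alpha$ denotes entailment in $T$. A generalized acceleration lemma (GAL) over $V$ is a tuple $(\mathit{base}, \mathit{stay}, \mathit{step}, \mathit{conc})$ of first-order formulas with $\mathit{base}, \mathit{conc}$ having free variables in $V$ and $\mathit{stay}, \mathit{step}$ having free variables in $V \cup V'$, such that: (I) for every sequence $\alpha \in \mathcal{A}(V)^\omega$ with $\alpha[0] \models_T \mathit{conc}$, if (a) for all $i$, $\langle\alpha[i],\alpha[i+1]\rangle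 \models_T \mathit{step} \lor \mathit{stay}$, and (b) for all $i$ there is $j \ge i$ with $\langle\alpha[j],\alpha[j+1]\rangle \models_T \mathit{step}$, then there is $k$ with $\alpha[k] \models_T \mathit{base}$; and (II) for all $\nu,\nu' \in \mathcal{A}(V)$ with $\nu \models_T \mathit{conc}$ and $\langle \nu,\nu'\rangle \models_T \mathit{step}\lor\mathit{stay}$, we have $\nu' \models_T \mathit{conc}$. *)

theory Defs
  imports Main
begin

text \<open>Formulas are modelled semantically: a formula with free variables in V is the
set of assignments (V -> values) satisfying it in the fixed theory T; a formula with
free variables in V and V' is a relation on pairs of assignments, where the pair
(nu1, nu2) stands for the combined assignment nu1 plus primed nu2.
The finite variable set V is the finite type 'v.\<close>

type_synonym ('v, 'a) assignment = "'v \<Rightarrow> 'a"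
type_synonym ('v, 'a) sformula = "('v, 'a) assignment \<Rightarrow> bool"
type_synonym ('v, 'a) tformula = "('v, 'a) assignment \<Rightarrow> ('v, 'a) assignment \<Rightarrow> bool"

definition is_GAL ::
  "('v, 'a) sformula \<Rightarrow> ('v, 'a) tformula \<Rightarrow> ('v, 'a) tformula \<Rightarrow> ('v, 'a) sformula \<Rightarrow> bool"
where
  "is_GAL base stay step conc \<longleftrightarrow>
     (\<forall>\<alpha> :: nat \<Rightarrow> ('v, 'a) assignment.
        conc (\<alpha> 0) \<longrightarrow>
        (\<forall>i. step (\<alpha> i) (\<alpha> (Suc i)) \<or> stay (\<alpha> i) (\<alpha> (Suc i))) \<longrightarrow>
        (\<forall>i. \<exists>j\<ge>i. step (\<alpha> j) (\<alpha> (Suc j))) \<longrightarrow>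
        (\<exists>k. base (\<alpha> k)))
   \<and> (\<forall>\<nu> \<nu>'. conc \<nu> \<and> (step \<nu> \<nu>' \<or> stay \<nu> \<nu>') \<longrightarrow> conc \<nu>')"

end

theory Submission
  imports Defs "HOL-Library.Infinite_Set"
begin

text \<open>Every transition of the combined lemma is a step or stay of the first lemma. If infinitely
many of them are first-lemma steps taken in a conc0 state, the first lemma applies from
any such state. Otherwise, from some point on every transition is a step1 or a stay1,
infinitely many of them step1-transitions out of conc1 states, and the second lemma applies
from one of those lying beyond that point. Closure of the conclusion is componentwise.\<close>

lemma is_GAL_conc_closed:
  assumes "is_GAL base stay step conc" "conc \<nu>" "step \<nu> \<nu>' \<or> stay \<nu> \<nu>'"
  shows "conc \<nu>'"
  using assms unfolding is_GAL_def by blast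

text \<open>The progress condition is applied to the suffix of the run starting at a conc state
beyond which all transitions are steps or stays.\<close>

lemma is_GAL_reaches_base:
  fixes \<alpha> :: "nat \<Rightarrow> ('v, 'a) assignment"
  assumes gal: "is_GAL base stay step conc"
    and trans: "\<forall>\<^sub>\<infinity>i. step (\<alpha> i) (\<alpha> (Suc i)) \<or> stay (\<alpha> i) (\<alpha> (Suc i))"
    and steps: "\<exists>\<^sub>\<infinity>i. conc (\<alpha> i) \<and> step (\<alpha> i) (\<alpha> (Suc i))"
  shows "\<exists>n. base (\<alpha> n)"
proof -
  obtain m where m: "\<And>i. i \<ge> m \<Longrightarrow> step (\<alpha> i) (\<alpha> (Suc i)) \<or> stay (\<alpha> i) (\<alpha> (Suc i))"
    using trans unfolding MOST_nat_le by blast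
  obtain k where "k \<ge> m" "conc (\<alpha> k)"
    using steps unfolding INFM_nat_le by blast
  define \<beta> where "\<beta> i = \<alpha> (k + i)" for i
  have "\<exists>j\<ge>i. step (\<beta> j) (\<beta> (Suc j))" for i
  proof -
    obtain n where "n \<ge> k + i" "step (\<alpha> n) (\<alpha> (Suc n))"
      using steps unfolding INFM_nat_le by blast
    then show ?thesis
      unfolding \<beta>_def by (intro exI[of _ "n - k"]) (simp add: Suc_diff_le)
  qed
  moreover have "step (\<beta> i) (\<beta> (Suc i)) \<or> stay (\<beta> i) (\<beta> (Suc i))" for i
    unfolding \<beta>_def using m[of "k + i"] \<open>k \<ge> m\<close> by simp
  moreover have "conc (\<beta> 0)"
    unfolding \<beta>_def using \<open>conc (\<alpha> k)\<close> by simp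
  ultimately obtain n where "base (\<beta> n)"
    using gal unfolding is_GAL_def by blast
  then show ?thesis
    unfolding \<beta>_def by blast
qed

lemma is_GAL_progressI:
  assumes "\<And>\<alpha>. conc (\<alpha> 0) \<Longrightarrow> (\<And>i. step (\<alpha> i) (\<alpha> (Suc i)) \<or> stay (\<alpha> i) (\<alpha> (Suc i))) \<Longrightarrow>
      \<exists>\<^sub>\<infinity>i. step (\<alpha> i) (\<alpha> (Suc i)) \<Longrightarrow> \<exists>k. base (\<alpha> k)"
    and "\<And>\<nu> \<nu>'. conc \<nu> \<Longrightarrow> step \<nu> \<nu>' \<or> stay \<nu> \<nu>' \<Longrightarrow> conc \<nu>'"
  shows "is_GAL base stay step conc"
  using assms unfolding is_GAL_def INFM_nat_le by blast

theorem lemma2: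
  fixes base0 base1 conc0 conc1 :: "('v::finite, 'a) sformula"
    and stay0 stay1 step0 step1 :: "('v, 'a) tformula"
  assumes "is_GAL base0 stay0 step0 conc0"
    and "is_GAL base1 stay1 step1 conc1"
  shows "is_GAL (\<lambda>\<nu>. base0 \<nu> \<or> base1 \<nu>)
                (\<lambda>\<nu> \<nu>'. stay0 \<nu> \<nu>' \<and> stay1 \<nu> \<nu>')
                (\<lambda>\<nu> \<nu>'. (conc0 \<nu> \<and> step0 \<nu> \<nu>') \<or> (conc1 \<nu> \<and> step1 \<nu> \<nu>' \<and> stay0 \<nu> \<nu>'))
                (\<lambda>\<nu>. conc0 \<nu> \<or> conc1 \<nu>)"
proof (rule is_GAL_progressI)
  fix \<alpha> :: "nat \<Rightarrow> ('v, 'a) assignment"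
  define A where "A i \<longleftrightarrow> conc0 (\<alpha> i) \<and> step0 (\<alpha> i) (\<alpha> (Suc i))" for i
  define B where "B i \<longleftrightarrow> conc1 (\<alpha> i) \<and> step1 (\<alpha> i) (\<alpha> (Suc i)) \<and> stay0 (\<alpha> i) (\<alpha> (Suc i))" for i
  assume trans: "\<And>i. (A i \<or> B i) \<or> stay0 (\<alpha> i) (\<alpha> (Suc i)) \<and> stay1 (\<alpha> i) (\<alpha> (Suc i))"
    and "\<exists>\<^sub>\<infinity>i. A i \<or> B i"
  then consider "\<exists>\<^sub>\<infinity>i. A i" | "\<not> (\<exists>\<^sub>\<infinity>i. A i)" "\<exists>\<^sub>\<infinity>i. B i"
    unfolding INFM_disj_distrib by blast
  then show "\<exists>k. base0 (\<alpha> k) \<or> base1 (\<alpha> k)"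
  proof cases
    case 1
    have "\<forall>\<^sub>\<infinity>i. step0 (\<alpha> i) (\<alpha> (Suc i)) \<or> stay0 (\<alpha> i) (\<alpha> (Suc i))"
      using trans unfolding A_def B_def by (intro always_eventually) blast
    with assms(1) 1 show ?thesis
      unfolding A_def by (blast dest: is_GAL_reaches_base)
  next
    case 2
    then have "\<forall>\<^sub>\<infinity>i. \<not> A i"
      by simp
    then have "\<forall>\<^sub>\<infinity>i. step1 (\<alpha> i) (\<alpha> (Suc i)) \<or> stay1 (\<alpha> i) (\<alpha> (Suc i))"
      by (rule eventually_mono) (use trans in \<open>auto simp: B_def\<close>)
    moreover have "\<exists>\<^sub>\<infinity>i. conc1 (\<alpha> i) \<and> step1 (\<alpha> i) (\<alpha> (Suc i))"
      using 2 by (elim INFM_mono) (simp add: B_def)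
    ultimately show ?thesis
      using assms(2) by (blast dest: is_GAL_reaches_base)
  qed
qed (use assms is_GAL_conc_closed in blast)

end
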